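(* Let $M$ be a loopless matroid of rank $k$ on a ground set $E$ of size $n$. There is an injective map sending each chain of flats $F_0\subsetneq F_1\subsetneq\cdots\subsetneq F_m$ of $M$ (for any $m\ge0$) to a chain of flats $G_0\subsetneq G_1\subsetneq\cdots\subsetneq G_m$ of the uniform matroid $U_{k,n}$ on $E$, such that $\mathrm{rk}_M(F_j)=\mathrm{rk}_{U_{k,n}}(G_j)$ for all $0\le j\le m$.
   Context: $U_{k,n}$ on the ground set $E$ ($|E|=n$) is the matroid whose bases are all $k$-subsets of $E$. Flats of a matroid are subsets $F$ such that adding any element strictly increases the rank; loopless means every singleton has rank $1$. *)

theory Defs
  imports Main
begin

definition matroid :: "'a set \<Rightarrow> ('a set \<Rightarrow> bool) \<Rightarrow> bool" where
  "matroid E indep \<longleftrightarrow> finite E \<and> indep {} \<and>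
     (\<forall>X. indep X \<longrightarrow> X \<subseteq> E) \<and>
     (\<forall>X Y. indep Y \<and> X \<subseteq> Y \<longrightarrow> indep X) \<and>
     (\<forall>X Y. indep X \<and> indep Y \<and> card X < card Y \<longrightarrow> (\<exists>e\<in>Y - X. indep (insert e X)))"

definition mrank :: "('a set \<Rightarrow> bool) \<Rightarrow> 'a set \<Rightarrow> nat" where
  "mrank indep X = Max {card Y | Y. Y \<subseteq> X \<and> indep Y}"

definition mflat :: "'a set \<Rightarrow> ('a set \<Rightarrow> bool) \<Rightarrow> 'a set \<Rightarrow> bool" where
  "mflat E indep F \<longleftrightarrow> F \<subseteq> E \<and> (\<forall>e\<in>E - F. mrank indep (insert e F) > mrank indep F)"

definition loopless :: "'a set \<Rightarrow> ('a set \<Rightarrow> bool) \<Rightarrow> bool" where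
  "loopless E indep \<longleftrightarrow> (\<forall>e\<in>E. mrank indep {e} = 1)"

definition uniform_indep :: "'a set \<Rightarrow> nat \<Rightarrow> 'a set \<Rightarrow> bool" where
  "uniform_indep E k X \<longleftrightarrow> (\<exists>B. B \<subseteq> E \<and> card B = k \<and> X \<subseteq> B)"

definition flat_chain :: "'a set \<Rightarrow> ('a set \<Rightarrow> bool) \<Rightarrow> 'a set list \<Rightarrow> bool" where
  "flat_chain E indep Fs \<longleftrightarrow> Fs \<noteq> [] \<and> (\<forall>F\<in>set Fs. mflat E indep F) \<and>
     (\<forall>j. Suc j < length Fs \<longrightarrow> Fs ! j \<subset> Fs ! Suc j)"

end

theory Submission
  imports Defs
begin

text \<open>Pick bases \<open>B\<^sub>0 \<subseteq> \<dots> \<subseteq> B\<^sub>m\<close> of the flats of the chain by successively extending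
  independent sets. A set of size below \<open>k\<close> is a flat of \<open>U\<^sub>k\<^sub>,\<^sub>n\<close> of rank equal to its size,
  so sending \<open>F\<^sub>j\<close> to \<open>B\<^sub>j\<close>, or to \<open>E\<close> when \<open>B\<^sub>j\<close> already has size \<open>k\<close> (which forces
  \<open>F\<^sub>j = E\<close>), preserves ranks and strict inclusions. The map is injective because every flat
  is the closure of any of its bases.\<close>

definition mbasis_of :: "('a set \<Rightarrow> bool) \<Rightarrow> 'a set \<Rightarrow> 'a set \<Rightarrow> bool" where
  "mbasis_of indep X B \<longleftrightarrow> B \<subseteq> X \<and> indep B \<and> card B = mrank indep X"

text \<open>This is the closure of \<open>B\<close> only for independent \<open>B\<close>, the only case used.\<close>
definition mclosure :: "'a set \<Rightarrow> ('a set \<Rightarrow> bool) \<Rightarrow> 'a set \<Rightarrow> 'a set" where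
  "mclosure E indep B = {e\<in>E. e \<in> B \<or> \<not> indep (insert e B)}"

lemma matroid_finite: "matroid E indep \<Longrightarrow> finite E"
  unfolding matroid_def by blast

lemma matroid_indep_subset: "matroid E indep \<Longrightarrow> indep X \<Longrightarrow> X \<subseteq> E"
  unfolding matroid_def by blast

lemma matroid_indep_empty: "matroid E indep \<Longrightarrow> indep {}"
  unfolding matroid_def by blast

lemma matroid_augment:
  "matroid E indep \<Longrightarrow> indep X \<Longrightarrow> indep Y \<Longrightarrow> card X < card Y \<Longrightarrow> \<exists>e\<in>Y - X. indep (insert e X)"
  unfolding matroid_def by blast

lemma matroid_indep_finite: "matroid E indep \<Longrightarrow> indep X \<Longrightarrow> finite X"
  by (meson matroid_finite matroid_indep_subset finite_subset)

lemma finite_mrank_values: "matroid E indep \<Longrightarrow> finite {card Y | Y. Y \<subseteq> X \<and> indep Y}"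
  by (rule finite_subset[of _ "card ` Pow E"]) (auto dest: matroid_indep_subset matroid_finite)

lemma card_le_mrank: "matroid E indep \<Longrightarrow> Y \<subseteq> X \<Longrightarrow> indep Y \<Longrightarrow> card Y \<le> mrank indep X"
  unfolding mrank_def by (rule Max_ge[OF finite_mrank_values]) auto

lemma ex_mbasis_of: "matroid E indep \<Longrightarrow> \<exists>B. mbasis_of indep X B"
proof -
  assume m: "matroid E indep"
  have "{card Y | Y. Y \<subseteq> X \<and> indep Y} \<noteq> {}" using matroid_indep_empty[OF m] by blast
  from Max_in[OF finite_mrank_values[OF m] this] show ?thesis
    unfolding mrank_def mbasis_of_def by auto
qed

lemma mrank_mono: "matroid E indep \<Longrightarrow> X \<subseteq> Y \<Longrightarrow> mrank indep X \<le> mrank indep Y"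
  by (metis card_le_mrank ex_mbasis_of mbasis_of_def order_trans)

lemma mrank_le_card: "matroid E indep \<Longrightarrow> X \<subseteq> E \<Longrightarrow> mrank indep X \<le> card X"
  by (metis card_mono ex_mbasis_of matroid_finite mbasis_of_def rev_finite_subset)

lemma indep_extend_to_mbasis_of:
  assumes m: "matroid E indep" and "indep I" "I \<subseteq> X"
  shows "\<exists>B. I \<subseteq> B \<and> mbasis_of indep X B"
  using assms(2,3)
proof (induction "mrank indep X - card I" arbitrary: I)
  case 0
  then show ?case
    using card_le_mrank[OF m] by (metis diff_is_0_eq le_antisym mbasis_of_def order_refl)
next
  case (Suc d)
  obtain Y where Y: "mbasis_of indep X Y" using ex_mbasis_of[OF m] by blast
  have "card I < card Y" using Suc.hyps(2) Y unfolding mbasis_of_def by linarith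
  then obtain e where e: "e \<in> Y - I" "indep (insert e I)"
    using matroid_augment[OF m Suc.prems(1)] Y unfolding mbasis_of_def by blast
  have "card (insert e I) = Suc (card I)"
    using e matroid_indep_finite[OF m Suc.prems(1)] by simp
  then have "d = mrank indep X - card (insert e I)"
    using Suc.hyps(2) by simp
  moreover have "insert e I \<subseteq> X"
    using Suc.prems(2) e Y unfolding mbasis_of_def by auto
  ultimately obtain B where "insert e I \<subseteq> B" "mbasis_of indep X B"
    using Suc.hyps(1)[of "insert e I"] e(2) by blast
  then show ?case by blast
qed

lemma mclosure_mbasis_of_mflat:
  assumes m: "matroid E indep" and F: "mflat E indep F" and B: "mbasis_of indep F B"
  shows "mclosure E indep B = F"
proof -
  have BF: "B \<subseteq> F" and iB: "indep B" and cB: "card B = mrank indep F"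
    using B unfolding mbasis_of_def by auto
  have fB: "finite B" using matroid_indep_finite[OF m iB] .
  have "x \<in> F" if x: "x \<in> mclosure E indep B" for x
  proof (rule ccontr)
    assume xF: "x \<notin> F"
    have "\<not> indep (insert x B)" and "x \<in> E"
      using x xF BF unfolding mclosure_def by auto
    txt \<open>Augment \<open>B\<close> from a basis of \<open>insert x F\<close>; the new element cannot be \<open>x\<close>, so it
      lies in \<open>F\<close>, contradicting the maximality of \<open>B\<close>.\<close>
    moreover have "mrank indep F < mrank indep (insert x F)"
      using F xF \<open>x \<in> E\<close> unfolding mflat_def by blast
    moreover obtain I where I: "mbasis_of indep (insert x F) I" using ex_mbasis_of[OF m] by blast
    ultimately obtain y where y: "y \<in> I - B" "y \<noteq> x" "indep (insert y B)"
      using matroid_augment[OF m iB, of I] cB unfolding mbasis_of_def by fastforce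
    then have "insert y B \<subseteq> F" using I BF unfolding mbasis_of_def by auto
    from card_le_mrank[OF m this y(3)] show False using y fB cB by simp
  qed
  moreover have "x \<in> mclosure E indep B" if x: "x \<in> F" for x
  proof (rule ccontr)
    assume "x \<notin> mclosure E indep B"
    then have "x \<notin> B" "indep (insert x B)"
      using x F unfolding mclosure_def mflat_def by auto
    moreover have "insert x B \<subseteq> F" using x BF by auto
    ultimately show False using card_le_mrank[OF m, of "insert x B" F] fB cB by simp
  qed
  ultimately show ?thesis by blast
qed

lemma mrank_mflat_strict_mono:
  assumes m: "matroid E indep" and F: "mflat E indep F" and "F \<subset> F'" "F' \<subseteq> E"
  shows "mrank indep F < mrank indep F'"
proof -
  obtain e where e: "e \<in> F'" "e \<notin> F" using \<open>F \<subset> F'\<close> by blast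
  then have "mrank indep F < mrank indep (insert e F)"
    using F \<open>F' \<subseteq> E\<close> unfolding mflat_def by blast
  also have "\<dots> \<le> mrank indep F'" using mrank_mono[OF m] e \<open>F \<subset> F'\<close> by blast
  finally show ?thesis .
qed

lemma mflat_ground: "mflat E indep E"
  unfolding mflat_def by simp

lemma mrank_uniform_indep:
  assumes fE: "finite E" and k: "k \<le> card E" and X: "X \<subseteq> E"
  shows "mrank (uniform_indep E k) X = min (card X) k"
  unfolding mrank_def
proof (rule Max_eqI)
  show "finite {card Y |Y. Y \<subseteq> X \<and> uniform_indep E k Y}"
    by (rule finite_subset[of _ "card ` Pow E"]) (use X fE in auto)
next
  fix y assume "y \<in> {card Y |Y. Y \<subseteq> X \<and> uniform_indep E k Y}"
  then obtain Y B where Y: "y = card Y" "Y \<subseteq> X" "B \<subseteq> E" "card B = k" "Y \<subseteq> B"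
    unfolding uniform_indep_def by blast
  have "card Y \<le> card X" using Y X fE by (meson card_mono rev_finite_subset)
  moreover have "card Y \<le> card B" using Y fE by (meson card_mono rev_finite_subset)
  ultimately show "y \<le> min (card X) k" by (simp add: Y(1) flip: Y(4))
next
  obtain Y where Y: "Y \<subseteq> X" "card Y = min (card X) k" and fY: "finite Y"
    by (rule obtain_subset_with_card_n[of "min (card X) k" X]) simp
  have "card (E - Y) = card E - card Y" using Y X fY by (meson card_Diff_subset rev_finite_subset subset_trans)
  then have "k - card Y \<le> card (E - Y)" using k by simp
  then obtain Z where Z: "Z \<subseteq> E - Y" "card Z = k - card Y" and fZ: "finite Z"
    by (rule obtain_subset_with_card_n)
  have "Y \<inter> Z = {}" using Z by blast
  then have "card (Y \<union> Z) = k"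
    using Y Z card_Un_disjoint[OF fY fZ] by simp
  then have "uniform_indep E k Y" unfolding uniform_indep_def using Y Z X
    by (intro exI[of _ "Y \<union> Z"]) auto
  then show "min (card X) k \<in> {card Y |Y. Y \<subseteq> X \<and> uniform_indep E k Y}"
    unfolding Y(2)[symmetric] using Y(1) by blast
qed

lemma mflat_uniform_indep:
  assumes fE: "finite E" and k: "k \<le> card E" and X: "X \<subseteq> E" "card X < k"
  shows "mflat E (uniform_indep E k) X"
  unfolding mflat_def
proof (intro conjI ballI)
  fix e assume "e \<in> E - X"
  moreover have "finite X" using X fE finite_subset by blast
  ultimately show "mrank (uniform_indep E k) X < mrank (uniform_indep E k) (insert e X)"
    using mrank_uniform_indep[OF fE k] X by simp
qed (use X in simp)

lemma ex_nested_mbases_of: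
  assumes m: "matroid E indep"
  shows "sorted_wrt (\<subseteq>) Fs \<Longrightarrow> indep I \<Longrightarrow> \<forall>F\<in>set Fs. I \<subseteq> F \<Longrightarrow>
    \<exists>Bs. list_all2 (mbasis_of indep) Fs Bs \<and> sorted_wrt (\<subseteq>) Bs \<and> (\<forall>B\<in>set Bs. I \<subseteq> B)"
proof (induction Fs arbitrary: I)
  case Nil
  then show ?case by simp
next
  case (Cons F Fs)
  obtain B where B: "I \<subseteq> B" "mbasis_of indep F B"
    using indep_extend_to_mbasis_of[OF m Cons.prems(2), of F] Cons.prems(3) by auto
  then have "indep B" "\<forall>F'\<in>set Fs. B \<subseteq> F'"
    using Cons.prems(1) unfolding mbasis_of_def by auto
  then obtain Bs where "list_all2 (mbasis_of indep) Fs Bs" "sorted_wrt (\<subseteq>) Bs" "\<forall>B'\<in>set Bs. B \<subseteq> B'"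
    using Cons.IH[of B] Cons.prems(1) by auto
  then show ?case using B by (intro exI[of _ "B # Bs"]) auto
qed

lemma flat_chain_iff_sorted:
  "flat_chain E indep Fs \<longleftrightarrow> Fs \<noteq> [] \<and> (\<forall>F\<in>set Fs. mflat E indep F) \<and> sorted_wrt (\<subset>) Fs"
  unfolding flat_chain_def by (simp add: sorted_wrt_iff_nth_Suc_transp[OF transp_on_less])

lemma flat_chain_ex_nested_mbases_of:
  assumes m: "matroid E indep" and c: "flat_chain E indep Fs"
  shows "\<exists>Bs. list_all2 (mbasis_of indep) Fs Bs \<and> sorted_wrt (\<subseteq>) Bs"
proof -
  have "sorted_wrt (\<subseteq>) Fs"
    using c sorted_wrt_mono_rel[of Fs "(\<subset>)" "(\<subseteq>)"] by (auto simp: flat_chain_iff_sorted)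
  then show ?thesis
    using ex_nested_mbases_of[OF m _ matroid_indep_empty[OF m]] by blast
qed

definition uniform_flat_of :: "'a set \<Rightarrow> nat \<Rightarrow> 'a set \<Rightarrow> 'a set" where
  "uniform_flat_of E k B = (if card B = k then E else B)"

context
  fixes E :: "'a set" and indep :: "'a set \<Rightarrow> bool" and k :: nat
  assumes m: "matroid E indep" and rank_E: "mrank indep E = k"
begin

lemma mbasis_of_mflat_card_le:
  assumes "mflat E indep F" "mbasis_of indep F B"
  shows "card B \<le> k"
  using assms mrank_mono[OF m] rank_E unfolding mbasis_of_def mflat_def by metis

lemma mflat_eq_ground_if_mbasis_of_card:
  assumes F: "mflat E indep F" and B: "mbasis_of indep F B" and "card B = k"
  shows "F = E"
proof -
  have "mbasis_of indep E B" using B F \<open>card B = k\<close> rank_E unfolding mbasis_of_def mflat_def by auto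
  then show ?thesis
    using mclosure_mbasis_of_mflat[OF m] F B mflat_ground by metis
qed

lemma rank_le_card_ground: "k \<le> card E"
  using mrank_le_card[OF m, of E] rank_E by simp

lemma mrank_uniform_flat_of:
  assumes "mflat E indep F" "mbasis_of indep F B"
  shows "mrank (uniform_indep E k) (uniform_flat_of E k B) = mrank indep F"
  using assms mbasis_of_mflat_card_le[OF assms] rank_le_card_ground
    mrank_uniform_indep[OF matroid_finite[OF m] rank_le_card_ground]
  unfolding uniform_flat_of_def mbasis_of_def mflat_def by auto

lemma mflat_uniform_flat_of:
  assumes "mflat E indep F" "mbasis_of indep F B"
  shows "mflat E (uniform_indep E k) (uniform_flat_of E k B)"
  using assms mbasis_of_mflat_card_le[OF assms] mflat_ground
    mflat_uniform_indep[OF matroid_finite[OF m] rank_le_card_ground]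
  unfolding uniform_flat_of_def mbasis_of_def mflat_def by auto

lemma mclosure_uniform_flat_of:
  assumes "mflat E indep F" "mbasis_of indep F B"
  shows "mclosure E indep (uniform_flat_of E k B) = F"
  using mclosure_mbasis_of_mflat[OF m assms] mflat_eq_ground_if_mbasis_of_card[OF assms]
  unfolding uniform_flat_of_def mclosure_def by auto

lemma uniform_flat_of_strict_mono:
  assumes F: "mflat E indep F" "mbasis_of indep F B"
    and F': "mflat E indep F'" "mbasis_of indep F' B'"
    and "F \<subset> F'" "B \<subseteq> B'"
  shows "uniform_flat_of E k B \<subset> uniform_flat_of E k B'"
proof -
  have "card B < card B'"
    using mrank_mflat_strict_mono[OF m F(1) \<open>F \<subset> F'\<close>] F' F unfolding mflat_def mbasis_of_def by auto
  moreover have "card B' \<le> k" using mbasis_of_mflat_card_le[OF F'] .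
  moreover have "B' \<subseteq> E" using F' unfolding mflat_def mbasis_of_def by auto
  ultimately show ?thesis
    using \<open>B \<subseteq> B'\<close> unfolding uniform_flat_of_def by auto
qed

lemma uniform_flats_of_nested_mbases:
  assumes c: "flat_chain E indep Fs"
    and Bs: "list_all2 (mbasis_of indep) Fs Bs" "sorted_wrt (\<subseteq>) Bs"
  defines "Gs \<equiv> map (uniform_flat_of E k) Bs"
  shows "flat_chain E (uniform_indep E k) Gs"
    and "\<forall>j < length Fs. mrank indep (Fs ! j) = mrank (uniform_indep E k) (Gs ! j)"
    and "map (mclosure E indep) Gs = Fs"
proof -
  have len: "length Gs = length Fs" and Gs_nth: "\<And>j. j < length Fs \<Longrightarrow> Gs ! j = uniform_flat_of E k (Bs ! j)"
    using list_all2_lengthD[OF Bs(1)] unfolding Gs_def by auto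
  have flat: "\<And>j. j < length Fs \<Longrightarrow> mflat E indep (Fs ! j)"
    using c by (simp add: flat_chain_iff_sorted)
  have basis: "\<And>j. j < length Fs \<Longrightarrow> mbasis_of indep (Fs ! j) (Bs ! j)"
    using Bs(1) by (simp add: list_all2_conv_all_nth)
  have "sorted_wrt (\<subset>) Gs"
    unfolding sorted_wrt_iff_nth_less
  proof (intro allI impI)
    fix i j assume ij: "i < j" "j < length Gs"
    have j: "j < length Fs" "j < length Bs" and i: "i < length Fs"
      using ij len list_all2_lengthD[OF Bs(1)] by auto
    have "Fs ! i \<subset> Fs ! j" "Bs ! i \<subseteq> Bs ! j"
      using c Bs(2) ij(1) j by (auto simp: flat_chain_iff_sorted dest: sorted_wrt_nth_less)
    from uniform_flat_of_strict_mono[OF flat[OF i] basis[OF i] flat[OF j(1)] basis[OF j(1)] this]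
    show "Gs ! i \<subset> Gs ! j"
      using Gs_nth i j by simp
  qed
  moreover have "mflat E (uniform_indep E k) G" if G: "G \<in> set Gs" for G
  proof -
    obtain j where "j < length Fs" "G = Gs ! j" using G len by (auto simp: in_set_conv_nth)
    then show ?thesis using mflat_uniform_flat_of[OF flat basis, of j] Gs_nth by simp
  qed
  ultimately show "flat_chain E (uniform_indep E k) Gs"
    using c len by (auto simp: flat_chain_iff_sorted)
  show "\<forall>j < length Fs. mrank indep (Fs ! j) = mrank (uniform_indep E k) (Gs ! j)"
    using mrank_uniform_flat_of[OF flat basis] Gs_nth by simp
  show "map (mclosure E indep) Gs = Fs"
    using mclosure_uniform_flat_of[OF flat basis] Gs_nth len by (intro nth_equalityI) simp_all
qed

end

theorem lemma3p36:
  fixes E :: "'a set" and indep :: "'a set \<Rightarrow> bool" and k n :: nat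
  assumes "matroid E indep"
    and "loopless E indep"
    and "mrank indep E = k"
    and "card E = n"
  shows "\<exists>\<phi> :: 'a set list \<Rightarrow> 'a set list.
           inj_on \<phi> {Fs. flat_chain E indep Fs} \<and>
           (\<forall>Fs. flat_chain E indep Fs \<longrightarrow>
              flat_chain E (uniform_indep E k) (\<phi> Fs) \<and>
              length (\<phi> Fs) = length Fs \<and>
              (\<forall>j < length Fs. mrank indep (Fs ! j) = mrank (uniform_indep E k) (\<phi> Fs ! j)))"
proof -
  define \<phi> where "\<phi> Fs = map (uniform_flat_of E k)
    (SOME Bs. list_all2 (mbasis_of indep) Fs Bs \<and> sorted_wrt (\<subseteq>) Bs)" for Fs
  have \<phi>: "flat_chain E (uniform_indep E k) (\<phi> Fs) \<and> length (\<phi> Fs) = length Fs \<and>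
      (\<forall>j < length Fs. mrank indep (Fs ! j) = mrank (uniform_indep E k) (\<phi> Fs ! j)) \<and>
      map (mclosure E indep) (\<phi> Fs) = Fs"
    if c: "flat_chain E indep Fs" for Fs
  proof -
    let ?Bs = "SOME Bs. list_all2 (mbasis_of indep) Fs Bs \<and> sorted_wrt (\<subseteq>) Bs"
    have Bs: "list_all2 (mbasis_of indep) Fs ?Bs" "sorted_wrt (\<subseteq>) ?Bs"
      using someI_ex[OF flat_chain_ex_nested_mbases_of[OF assms(1) c]] by auto
    then have "length ?Bs = length Fs" by (simp add: list_all2_lengthD)
    then show ?thesis
      unfolding \<phi>_def using uniform_flats_of_nested_mbases[OF assms(1,3) c Bs] by simp
  qed
  have "inj_on \<phi> {Fs. flat_chain E indep Fs}"
    by (rule inj_onI) (metis \<phi> mem_Collect_eq)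
  then show ?thesis using \<phi> by blast
qed

end
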